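(* Let $\mathcal{X}$ be a feature space and $\mathcal{Y}=\{+1,-1\}$. Let $p(\boldsymbol{x},y)$ be a joint density on $\mathcal{X}\times\mathcal{Y}$ with class priors $\pi_+=p(y=+1)$, $\pi_-=p(y=-1)=1-\pi_+$ and class-conditional densities $p_+(\boldsymbol{x})=p(\boldsymbol{x}\mid y=+1)$, $p_-(\boldsymbol{x})=p(\boldsymbol{x}\mid y=-1)$. Suppose pairwise comparison data are generated as follows: two labeled examples $(\boldsymbol{x},y)$ and $(\boldsymbol{x}',y')$ are drawn independently from $p(\boldsymbol{x},y)$, and the unlabeled pair $(\boldsymbol{x},\boldsymbol{x}')$ is collected as a pairwise comparison if and only if $(y,y')\in\{(+1,+1),(+1,-1),(-1,-1)\}$; the dataset $\widetilde{\mathcal{D}}=\{(\boldsymbol{x}_i,\boldsymbol{x}_i')\}_{i=1}^n$ consists of $n$ independently collected such pairs. Let $$q(\boldsymbol{x},\boldsymbol{x}')=\pi_+^2p_+(\boldsymbol{x})p_+(\boldsymbol{x}')+\pi_-^2p_-(\boldsymbol{x})p_-(\boldsymbol{x}')+\pi_+\pi_-p_+(\boldsymbol{x})p_-(\boldsymbol{x}'),\qquad \widetilde{p}(\boldsymbol{x},\boldsymbol{x}')=\frac{q(\boldsymbol{x},\boldsymbol{x}')}{\pi_+^2+\pi_-^2+\pi_+\pi_-}.$$ Then the collected pairs are independently drawn from $\widetilde{p}(\boldsymbol{x},\boldsymbol{x}')$, i.e. $\widetilde{\mathcal{D}}\stackrel{\mathrm{i.i.d.}}{\sim}\widetilde{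p}(\boldsymbol{x},\boldsymbol{x}')$.
   Context: The true labels $y,y'$ are never observed by the learner; only the pair $(\boldsymbol{x},\boldsymbol{x}')$ is recorded. The density of a collected pair is the conditional density of $(\boldsymbol{x},\boldsymbol{x}')$ given the event $(y,y')\in\{(+1,+1),(+1,-1),(-1,-1)\}$. *)

theory Defs
  imports "HOL-Probability.Probability"
begin

text \<open>Labels: \<open>Y = {+1,-1}\<close> rendered as the integers 1 and -1.
  \<open>pip\<close> is the class prior \<open>\<pi>_+\<close>; \<open>\<pi>_- = 1 - pip\<close>.
  \<open>pp\<close>, \<open>pn\<close> are the class-conditional densities w.r.t. the base measure \<open>M\<close>
  on the feature space.\<close>

definition label_space :: "int measure" where
  "label_space = count_space {1, -1}"

definition q_dens :: "real \<Rightarrow> ('a \<Rightarrow> real) \<Rightarrow> ('a \<Rightarrow> real) \<Rightarrow> 'a \<Rightarrow> 'a \<Rightarrow> real" where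
  "q_dens pip pp pn x x' =
     pip^2 * pp x * pp x' + (1 - pip)^2 * pn x * pn x' + pip * (1 - pip) * pp x * pn x'"

definition ptilde :: "real \<Rightarrow> ('a \<Rightarrow> real) \<Rightarrow> ('a \<Rightarrow> real) \<Rightarrow> 'a \<Rightarrow> 'a \<Rightarrow> real" where
  "ptilde pip pp pn x x' =
     q_dens pip pp pn x x' / (pip^2 + (1 - pip)^2 + pip * (1 - pip))"

definition joint_law :: "'a measure \<Rightarrow> real \<Rightarrow> ('a \<Rightarrow> real) \<Rightarrow> ('a \<Rightarrow> real) \<Rightarrow> ('a \<times> int) measure" where
  "joint_law M pip pp pn =
     density (M \<Otimes>\<^sub>M label_space)
       (\<lambda>(x, y). ennreal (if y = 1 then pip * pp x else (1 - pip) * pn x))"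

definition two_draws :: "'a measure \<Rightarrow> real \<Rightarrow> ('a \<Rightarrow> real) \<Rightarrow> ('a \<Rightarrow> real) \<Rightarrow> (('a \<times> int) \<times> ('a \<times> int)) measure" where
  "two_draws M pip pp pn = joint_law M pip pp pn \<Otimes>\<^sub>M joint_law M pip pp pn"

definition collect_event :: "'a measure \<Rightarrow> real \<Rightarrow> ('a \<Rightarrow> real) \<Rightarrow> ('a \<Rightarrow> real) \<Rightarrow> (('a \<times> int) \<times> ('a \<times> int)) set" where
  "collect_event M pip pp pn =
     space (two_draws M pip pp pn) \<inter>
     {((x, y), (x', y')). (y, y') \<in> {(1, 1), (1, -1), (-1, -1)}}"

definition collected_pair_law :: "'a measure \<Rightarrow> real \<Rightarrow> ('a \<Rightarrow> real) \<Rightarrow> ('a \<Rightarrow> real) \<Rightarrow> ('a \<times> 'a) measure" where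
  "collected_pair_law M pip pp pn =
     distr (uniform_measure (two_draws M pip pp pn) (collect_event M pip pp pn))
           (M \<Otimes>\<^sub>M M) (\<lambda>((x, y), (x', y')). (x, x'))"

definition dataset_law :: "'a measure \<Rightarrow> real \<Rightarrow> ('a \<Rightarrow> real) \<Rightarrow> ('a \<Rightarrow> real) \<Rightarrow> nat \<Rightarrow> (nat \<Rightarrow> 'a \<times> 'a) measure" where
  "dataset_law M pip pp pn n = PiM {..<n} (\<lambda>_. collected_pair_law M pip pp pn)"

end

theory Submission
  imports Defs
begin

text \<open>Two independent draws from \<open>p(x,y)\<close> have the density \<open>p(x,y) p(x',y')\<close> with respect
  to the product of two copies of \<open>M \<times> {+1,-1}\<close>. Restricting it to the collection event and
  summing out the finitely many labels leaves the density \<open>q(x,x')\<close> on \<open>M \<times> M\<close>; since \<open>p\<^sub>+\<close>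
  and \<open>p\<^sub>-\<close> integrate to one, the total mass of \<open>q\<close>, i.e. the probability of collecting a pair,
  is \<open>\<pi>\<^sub>+\<^sup>2 + \<pi>\<^sub>-\<^sup>2 + \<pi>\<^sub>+\<pi>\<^sub>-\<close>, and conditioning divides by exactly this constant.\<close>

lemma nn_integral_pair_count_space_finite:
  assumes "finite L" and g: "g \<in> borel_measurable (N \<Otimes>\<^sub>M count_space L)"
  shows "(\<integral>\<^sup>+ z. g z \<partial>(N \<Otimes>\<^sub>M count_space L)) = (\<integral>\<^sup>+ x. (\<Sum>y\<in>L. g (x, y)) \<partial>N)"
proof -
  interpret L: sigma_finite_measure "count_space L"
    using \<open>finite L\<close> by (rule sigma_finite_measure_count_space_finite)
  show ?thesis
    using \<open>finite L\<close> by (simp add: L.nn_integral_fst[OF g, symmetric] nn_integral_count_space_finite)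
qed

lemma nn_integral_forget_labels:
  assumes L: "finite L" "finite L'" and M': "sigma_finite_measure M'"
    and h: "h \<in> borel_measurable ((M \<Otimes>\<^sub>M count_space L) \<Otimes>\<^sub>M (M' \<Otimes>\<^sub>M count_space L'))"
  shows "(\<integral>\<^sup>+ z. h z \<partial>((M \<Otimes>\<^sub>M count_space L) \<Otimes>\<^sub>M (M' \<Otimes>\<^sub>M count_space L'))) =
    (\<integral>\<^sup>+ (x, x'). (\<Sum>y\<in>L. \<Sum>y'\<in>L'. h ((x, y), (x', y'))) \<partial>(M \<Otimes>\<^sub>M M'))"
proof -
  interpret M': sigma_finite_measure M' by fact
  interpret N': sigma_finite_measure "M' \<Otimes>\<^sub>M count_space L'"
    using M' L(2) by (intro sigma_finite_pair_measure sigma_finite_measure_count_space_finite)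
  let ?F = "\<lambda>a. \<integral>\<^sup>+ x'. (\<Sum>y'\<in>L'. h (a, (x', y'))) \<partial>M'"
  have [measurable]: "?F \<in> borel_measurable (M \<Otimes>\<^sub>M count_space L)"
    using h by measurable
  have "(\<integral>\<^sup>+ z. h z \<partial>((M \<Otimes>\<^sub>M count_space L) \<Otimes>\<^sub>M (M' \<Otimes>\<^sub>M count_space L')))
      = (\<integral>\<^sup>+ a. \<integral>\<^sup>+ b. h (a, b) \<partial>(M' \<Otimes>\<^sub>M count_space L') \<partial>(M \<Otimes>\<^sub>M count_space L))"
    by (rule N'.nn_integral_fst[OF h, symmetric])
  also have "\<dots> = (\<integral>\<^sup>+ a. ?F a \<partial>(M \<Otimes>\<^sub>M count_space L))"
    using h L(2) by (intro nn_integral_cong nn_integral_pair_count_space_finite measurable_Pair2)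
  also have "\<dots> = (\<integral>\<^sup>+ x. (\<Sum>y\<in>L. ?F (x, y)) \<partial>M)"
    using L by (intro nn_integral_pair_count_space_finite) measurable
  also have "\<dots> = (\<integral>\<^sup>+ x. \<integral>\<^sup>+ x'. (\<Sum>y\<in>L. \<Sum>y'\<in>L'. h ((x, y), (x', y'))) \<partial>M' \<partial>M)"
    by (intro nn_integral_cong nn_integral_sum[symmetric] borel_measurable_sum measurable_compose[OF _ h]) simp_all
  also have "\<dots> = (\<integral>\<^sup>+ (x, x'). (\<Sum>y\<in>L. \<Sum>y'\<in>L'. h ((x, y), (x', y'))) \<partial>(M \<Otimes>\<^sub>M M'))"
    using h by (subst M'.nn_integral_fst[symmetric]) (simp_all add: case_prod_beta')
  finally show ?thesis .
qed

lemma borel_measurable_label_sum: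
  fixes h :: "_ \<Rightarrow> ennreal"
  assumes "h \<in> borel_measurable ((M \<Otimes>\<^sub>M count_space L) \<Otimes>\<^sub>M (M' \<Otimes>\<^sub>M count_space L'))"
  shows "(\<lambda>(x, x'). \<Sum>y\<in>L. \<Sum>y'\<in>L'. h ((x, y), (x', y'))) \<in> borel_measurable (M \<Otimes>\<^sub>M M')"
proof -
  have "(\<lambda>z. h ((fst z, y), (snd z, y'))) \<in> borel_measurable (M \<Otimes>\<^sub>M M')"
    if "y \<in> L" "y' \<in> L'" for y y'
  proof (rule measurable_compose[OF _ assms])
    show "(\<lambda>z. ((fst z, y), (snd z, y')))
        \<in> measurable (M \<Otimes>\<^sub>M M') ((M \<Otimes>\<^sub>M count_space L) \<Otimes>\<^sub>M (M' \<Otimes>\<^sub>M count_space L'))"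
      using that by (auto intro!: measurable_Pair)
  qed
  then show ?thesis
    unfolding case_prod_beta' by (intro borel_measurable_sum) auto
qed

lemma distr_density_forget_labels:
  assumes L: "finite L" "finite L'" and M': "sigma_finite_measure M'"
    and h[measurable]: "h \<in> borel_measurable ((M \<Otimes>\<^sub>M count_space L) \<Otimes>\<^sub>M (M' \<Otimes>\<^sub>M count_space L'))"
  shows "distr (density ((M \<Otimes>\<^sub>M count_space L) \<Otimes>\<^sub>M (M' \<Otimes>\<^sub>M count_space L')) h)
      (M \<Otimes>\<^sub>M M') (\<lambda>((x, y), (x', y')). (x, x'))
    = density (M \<Otimes>\<^sub>M M') (\<lambda>(x, x'). \<Sum>y\<in>L. \<Sum>y'\<in>L'. h ((x, y), (x', y')))"
    (is "distr (density ?P h) _ ?\<pi> = _")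
proof (rule measure_eqI)
  fix A assume "A \<in> sets (distr (density ?P h) (M \<Otimes>\<^sub>M M') ?\<pi>)"
  then have A[measurable]: "A \<in> sets (M \<Otimes>\<^sub>M M')" by simp
  have [measurable]: "?\<pi> \<in> measurable ?P (M \<Otimes>\<^sub>M M')"
    by (simp add: case_prod_beta')
  have "emeasure (distr (density ?P h) (M \<Otimes>\<^sub>M M') ?\<pi>) A = (\<integral>\<^sup>+ z. h z * indicator A (?\<pi> z) \<partial>?P)"
    by (auto simp: emeasure_distr emeasure_density intro!: nn_integral_cong split: split_indicator)
  also have "\<dots> = (\<integral>\<^sup>+ (x, x'). (\<Sum>y\<in>L. \<Sum>y'\<in>L'. h ((x, y), (x', y'))) * indicator A (x, x') \<partial>(M \<Otimes>\<^sub>M M'))"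
    using L M' by (subst nn_integral_forget_labels) (simp_all add: sum_distrib_right case_prod_beta')
  also have "\<dots> = emeasure (density (M \<Otimes>\<^sub>M M') (\<lambda>(x, x'). \<Sum>y\<in>L. \<Sum>y'\<in>L'. h ((x, y), (x', y')))) A"
    by (simp add: emeasure_density case_prod_beta')
  finally show "emeasure (distr (density ?P h) (M \<Otimes>\<^sub>M M') ?\<pi>) A = \<dots>" .
qed simp

lemma nn_integral_pair_mult:
  fixes u v :: "_ \<Rightarrow> ennreal"
  assumes "sigma_finite_measure M'" and [measurable]: "u \<in> borel_measurable M" "v \<in> borel_measurable M'"
  shows "(\<integral>\<^sup>+ (x, x'). u x * v x' \<partial>(M \<Otimes>\<^sub>M M')) = (\<integral>\<^sup>+ x. u x \<partial>M) * (\<integral>\<^sup>+ x'. v x' \<partial>M')"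
proof -
  interpret M': sigma_finite_measure M' by fact
  have "(\<integral>\<^sup>+ (x, x'). u x * v x' \<partial>(M \<Otimes>\<^sub>M M')) = (\<integral>\<^sup>+ x. \<integral>\<^sup>+ x'. u x * v x' \<partial>M' \<partial>M)"
    by (subst M'.nn_integral_fst[symmetric]) simp_all
  then show ?thesis
    by (simp add: nn_integral_cmult nn_integral_multc)
qed

definition label_density :: "real \<Rightarrow> ('a \<Rightarrow> real) \<Rightarrow> ('a \<Rightarrow> real) \<Rightarrow> 'a \<times> int \<Rightarrow> ennreal" where
  "label_density pip pp pn = (\<lambda>(x, y). ennreal (if y = 1 then pip * pp x else (1 - pip) * pn x))"

lemma joint_law_eq_density:
  "joint_law M pip pp pn = density (M \<Otimes>\<^sub>M label_space) (label_density pip pp pn)"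
  unfolding joint_law_def label_density_def ..

lemma borel_measurable_label_density:
  assumes "pp \<in> borel_measurable M" "pn \<in> borel_measurable M"
  shows "label_density pip pp pn \<in> borel_measurable (M \<Otimes>\<^sub>M label_space)"
  using assms unfolding label_space_def label_density_def by measurable

lemma sigma_finite_pair_label_space:
  "sigma_finite_measure M \<Longrightarrow> sigma_finite_measure (M \<Otimes>\<^sub>M label_space)"
  unfolding label_space_def
  by (intro sigma_finite_pair_measure sigma_finite_measure_count_space_finite) simp_all

lemma sets_two_draws:
  "sets (two_draws M pip pp pn) = sets ((M \<Otimes>\<^sub>M label_space) \<Otimes>\<^sub>M (M \<Otimes>\<^sub>M label_space))"
  unfolding two_draws_def joint_law_def by (intro sets_pair_measure_cong) simp_all

lemma measurable_features_two_draws: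
  "(\<lambda>((x, y), (x', y')). (x, x')) \<in> measurable (two_draws M pip pp pn) (M \<Otimes>\<^sub>M M)"
  unfolding measurable_cong_sets[OF sets_two_draws refl] by (simp add: case_prod_beta')

lemma collect_event_in_sets:
  "collect_event M pip pp pn \<in> sets (two_draws M pip pp pn)"
proof -
  have "collect_event M pip pp pn = space ((M \<Otimes>\<^sub>M label_space) \<Otimes>\<^sub>M (M \<Otimes>\<^sub>M label_space))
      - (space M \<times> {-1}) \<times> (space M \<times> {1})"
    by (auto simp: collect_event_def two_draws_def joint_law_def space_pair_measure label_space_def)
  also have "\<dots> \<in> sets ((M \<Otimes>\<^sub>M label_space) \<Otimes>\<^sub>M (M \<Otimes>\<^sub>M label_space))"
    by (intro sets.compl_sets pair_measureI) (auto simp: label_space_def)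
  finally show ?thesis
    unfolding sets_two_draws .
qed

lemma borel_measurable_q_dens:
  assumes "pp \<in> borel_measurable M" "pn \<in> borel_measurable M"
  shows "(\<lambda>(x, x'). ennreal (q_dens pip pp pn x x')) \<in> borel_measurable (M \<Otimes>\<^sub>M M)"
  using assms unfolding q_dens_def by measurable

locale class_conditional_densities =
  fixes M :: "'a measure" and pip :: real and pp pn :: "'a \<Rightarrow> real"
  assumes sigma_finite: "sigma_finite_measure M"
    and prior_nonneg: "0 \<le> pip" and prior_le_one: "pip \<le> 1"
    and pp_measurable[measurable]: "pp \<in> borel_measurable M"
    and pn_measurable[measurable]: "pn \<in> borel_measurable M"
    and pp_nonneg: "\<And>x. x \<in> space M \<Longrightarrow> 0 \<le> pp x"
    and pn_nonneg: "\<And>x. x \<in> space M \<Longrightarrow> 0 \<le> pn x"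
    and pp_normalized: "(\<integral>\<^sup>+ x. ennreal (pp x) \<partial>M) = 1"
    and pn_normalized: "(\<integral>\<^sup>+ x. ennreal (pn x) \<partial>M) = 1"
begin

lemma sigma_finite_joint_law: "sigma_finite_measure (joint_law M pip pp pn)"
proof -
  interpret N: sigma_finite_measure "M \<Otimes>\<^sub>M label_space"
    using sigma_finite by (rule sigma_finite_pair_label_space)
  show ?thesis
    unfolding joint_law_eq_density
    by (subst N.sigma_finite_iff_density_finite'[OF borel_measurable_label_density])
      (auto simp: label_density_def)
qed

lemma two_draws_eq_density:
  "two_draws M pip pp pn = density ((M \<Otimes>\<^sub>M label_space) \<Otimes>\<^sub>M (M \<Otimes>\<^sub>M label_space))
    (\<lambda>(a, b). label_density pip pp pn a * label_density pip pp pn b)"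
  unfolding two_draws_def joint_law_eq_density
  using sigma_finite sigma_finite_joint_law
  by (intro pair_measure_density borel_measurable_label_density sigma_finite_pair_label_space)
    (simp_all add: joint_law_eq_density)

lemma label_sum_collect_event:
  assumes x: "x \<in> space M" "x' \<in> space M"
  shows "(\<Sum>y\<in>{1, -1}. \<Sum>y'\<in>{1, -1}. label_density pip pp pn (x, y) * label_density pip pp pn (x', y')
      * indicator (collect_event M pip pp pn) ((x, y), (x', y'))) = ennreal (q_dens pip pp pn x x')"
proof -
  have sum_labels: "\<And>g :: int \<Rightarrow> ennreal. (\<Sum>y\<in>{1, -1}. g y) = g 1 + g (-1)"
    by simp
  have "(\<Sum>y\<in>{1, -1}. \<Sum>y'\<in>{1, -1}. label_density pip pp pn (x, y) * label_density pip pp pn (x', y')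
      * indicator (collect_event M pip pp pn) ((x, y), (x', y')))
    = ennreal (pip * pp x) * ennreal (pip * pp x') + ennreal (pip * pp x) * ennreal ((1 - pip) * pn x')
      + ennreal ((1 - pip) * pn x) * ennreal ((1 - pip) * pn x')"
    unfolding sum_labels
    using x by (simp add: label_density_def collect_event_def two_draws_def joint_law_def
        space_pair_measure label_space_def)
  also have "\<dots> = ennreal (pip * pp x * (pip * pp x') + pip * pp x * ((1 - pip) * pn x')
      + (1 - pip) * pn x * ((1 - pip) * pn x'))"
    using prior_nonneg prior_le_one pp_nonneg pn_nonneg x by (simp add: ennreal_mult ennreal_plus)
  also have "\<dots> = ennreal (q_dens pip pp pn x x')"
    by (simp add: q_dens_def power2_eq_square algebra_simps)
  finally show ?thesis .
qed

lemma distr_collect_event_two_draws: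
  "distr (density (two_draws M pip pp pn) (indicator (collect_event M pip pp pn))) (M \<Otimes>\<^sub>M M)
      (\<lambda>((x, y), (x', y')). (x, x'))
    = density (M \<Otimes>\<^sub>M M) (\<lambda>(x, x'). ennreal (q_dens pip pp pn x x'))"
proof -
  let ?P = "(M \<Otimes>\<^sub>M count_space {1, -1}) \<Otimes>\<^sub>M (M \<Otimes>\<^sub>M count_space {1, -1})"
  let ?g = "\<lambda>z. label_density pip pp pn (fst z) * label_density pip pp pn (snd z)
    * indicator (collect_event M pip pp pn) z"
  have [measurable]: "label_density pip pp pn \<in> borel_measurable (M \<Otimes>\<^sub>M count_space {1, -1})"
    using borel_measurable_label_density[OF pp_measurable pn_measurable] by (simp add: label_space_def)
  have [measurable]: "collect_event M pip pp pn \<in> sets ?P"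
    using collect_event_in_sets[of M pip pp pn] unfolding sets_two_draws label_space_def .
  have "density (two_draws M pip pp pn) (indicator (collect_event M pip pp pn)) = density ?P ?g"
    unfolding two_draws_eq_density label_space_def
    by (subst density_density_eq) (simp_all add: case_prod_beta')
  moreover have "distr (density ?P ?g) (M \<Otimes>\<^sub>M M) (\<lambda>((x, y), (x', y')). (x, x'))
    = density (M \<Otimes>\<^sub>M M) (\<lambda>(x, x'). \<Sum>y\<in>{1, -1}. \<Sum>y'\<in>{1, -1}. ?g ((x, y), (x', y')))"
    using sigma_finite by (intro distr_density_forget_labels) simp_all
  moreover have "\<dots> = density (M \<Otimes>\<^sub>M M) (\<lambda>(x, x'). ennreal (q_dens pip pp pn x x'))"
  proof (rule density_cong)
    show "(\<lambda>(x, x'). \<Sum>y\<in>{1, -1}. \<Sum>y'\<in>{1, -1}. ?g ((x, y), (x', y'))) \<in> borel_measurable (M \<Otimes>\<^sub>M M)"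
      by (rule borel_measurable_label_sum) measurable
    show "(\<lambda>(x, x'). ennreal (q_dens pip pp pn x x')) \<in> borel_measurable (M \<Otimes>\<^sub>M M)"
      using pp_measurable pn_measurable by (rule borel_measurable_q_dens)
    show "AE z in M \<Otimes>\<^sub>M M. (\<lambda>(x, x'). \<Sum>y\<in>{1, -1}. \<Sum>y'\<in>{1, -1}. ?g ((x, y), (x', y'))) z
        = (\<lambda>(x, x'). ennreal (q_dens pip pp pn x x')) z"
    proof (rule AE_I2)
      fix z assume "z \<in> space (M \<Otimes>\<^sub>M M)"
      then obtain x x' where z: "z = (x, x')" "x \<in> space M" "x' \<in> space M"
        by (auto simp: space_pair_measure)
      show "(\<lambda>(x, x'). \<Sum>y\<in>{1, -1}. \<Sum>y'\<in>{1, -1}. ?g ((x, y), (x', y'))) z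
          = (\<lambda>(x, x'). ennreal (q_dens pip pp pn x x')) z"
        unfolding z(1) prod.case fst_conv snd_conv using z(2,3) by (rule label_sum_collect_event)
    qed
  qed
  ultimately show ?thesis
    by simp
qed

lemma nn_integral_q_dens:
  "(\<integral>\<^sup>+ (x, x'). ennreal (q_dens pip pp pn x x') \<partial>(M \<Otimes>\<^sub>M M))
    = ennreal (pip^2 + (1 - pip)^2 + pip * (1 - pip))"
proof -
  let ?prod = "\<lambda>u v. \<lambda>(x, x'). ennreal (u x) * ennreal (v x')"
  have "(\<integral>\<^sup>+ (x, x'). ennreal (q_dens pip pp pn x x') \<partial>(M \<Otimes>\<^sub>M M))
      = (\<integral>\<^sup>+ z. ennreal (pip^2) * ?prod pp pp z + ennreal ((1 - pip)^2) * ?prod pn pn z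
          + ennreal (pip * (1 - pip)) * ?prod pp pn z \<partial>(M \<Otimes>\<^sub>M M))"
    using prior_nonneg prior_le_one pp_nonneg pn_nonneg
    by (intro nn_integral_cong) (auto simp: space_pair_measure q_dens_def ennreal_mult ennreal_plus mult.assoc)
  also have "\<dots> = ennreal (pip^2) + ennreal ((1 - pip)^2) + ennreal (pip * (1 - pip))"
    using sigma_finite pp_normalized pn_normalized
    by (simp add: nn_integral_add nn_integral_cmult nn_integral_pair_mult)
  also have "\<dots> = ennreal (pip^2 + (1 - pip)^2 + pip * (1 - pip))"
    using prior_nonneg prior_le_one by (simp add: ennreal_plus)
  finally show ?thesis .
qed

lemma emeasure_collect_event:
  "emeasure (two_draws M pip pp pn) (collect_event M pip pp pn)
    = ennreal (pip^2 + (1 - pip)^2 + pip * (1 - pip))"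
proof -
  let ?R = "density (two_draws M pip pp pn) (indicator (collect_event M pip pp pn))"
  let ?\<pi> = "\<lambda>((x, y), (x', y')). (x :: 'a, x')"
  have \<pi>: "?\<pi> \<in> measurable ?R (M \<Otimes>\<^sub>M M)"
    using measurable_features_two_draws by simp
  have "emeasure (two_draws M pip pp pn) (collect_event M pip pp pn) = emeasure ?R (space ?R)"
    using collect_event_in_sets[of M pip pp pn] by (simp add: emeasure_restricted Int_absorb2 sets.sets_into_space)
  also have "\<dots> = emeasure (distr ?R (M \<Otimes>\<^sub>M M) ?\<pi>) (space (M \<Otimes>\<^sub>M M))"
    using \<pi> by (simp add: emeasure_distr measurable_space[OF \<pi>] vimage_def Int_absorb1 subset_eq)
  also have "\<dots> = (\<integral>\<^sup>+ (x, x'). ennreal (q_dens pip pp pn x x') \<partial>(M \<Otimes>\<^sub>M M))"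
    using borel_measurable_q_dens[OF pp_measurable pn_measurable]
    by (simp add: distr_collect_event_two_draws emeasure_density cong: nn_integral_cong)
  finally show ?thesis
    unfolding nn_integral_q_dens .
qed

lemma collected_pair_law_eq_density:
  "collected_pair_law M pip pp pn = density (M \<Otimes>\<^sub>M M) (\<lambda>(x, x'). ennreal (ptilde pip pp pn x x'))"
proof -
  define Z where "Z = pip^2 + (1 - pip)^2 + pip * (1 - pip)"
  let ?R = "density (two_draws M pip pp pn) (indicator (collect_event M pip pp pn))"
  let ?\<pi> = "\<lambda>((x, y), (x', y')). (x :: 'a, x')"
  let ?q = "\<lambda>(x, x'). ennreal (q_dens pip pp pn x x')"
  have "0 < Z"
  proof -
    have "Z = (pip - 1/2)^2 + 3/4"
      unfolding Z_def by (simp add: power2_eq_square algebra_simps)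
    then show ?thesis
      by (metis add_nonneg_pos zero_le_power2 zero_less_divide_iff zero_less_numeral)
  qed
  have "collected_pair_law M pip pp pn = distr (density ?R (\<lambda>_. 1 / ennreal Z)) (M \<Otimes>\<^sub>M M) ?\<pi>"
    using collect_event_in_sets[of M pip pp pn] unfolding collected_pair_law_def uniform_measure_def
    by (simp add: density_density_eq divide_ennreal_def emeasure_collect_event[folded Z_def])
  also have "\<dots> = density (distr ?R (M \<Otimes>\<^sub>M M) ?\<pi>) (\<lambda>_. 1 / ennreal Z)"
    using measurable_features_two_draws by (intro density_distr[symmetric]) simp_all
  also have "\<dots> = density (M \<Otimes>\<^sub>M M) (\<lambda>z. ?q z * (1 / ennreal Z))"
    using borel_measurable_q_dens[OF pp_measurable pn_measurable]
    by (simp add: distr_collect_event_two_draws density_density_eq)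
  also have "\<dots> = density (M \<Otimes>\<^sub>M M) (\<lambda>(x, x'). ennreal (ptilde pip pp pn x x'))"
  proof (rule density_cong)
    show "(\<lambda>z. ?q z * (1 / ennreal Z)) \<in> borel_measurable (M \<Otimes>\<^sub>M M)"
      using borel_measurable_q_dens[OF pp_measurable pn_measurable] by simp
    show "(\<lambda>(x, x'). ennreal (ptilde pip pp pn x x')) \<in> borel_measurable (M \<Otimes>\<^sub>M M)"
      unfolding ptilde_def q_dens_def by measurable
    show "AE z in M \<Otimes>\<^sub>M M. ?q z * (1 / ennreal Z) = (\<lambda>(x, x'). ennreal (ptilde pip pp pn x x')) z"
    proof (rule AE_I2)
      fix z assume "z \<in> space (M \<Otimes>\<^sub>M M)"
      then obtain x x' where z: "z = (x, x')" "x \<in> space M" "x' \<in> space M"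
        by (auto simp: space_pair_measure)
      have "0 \<le> q_dens pip pp pn x x'"
        unfolding q_dens_def using prior_nonneg prior_le_one pp_nonneg pn_nonneg z(2,3) by simp
      then show "?q z * (1 / ennreal Z) = (\<lambda>(x, x'). ennreal (ptilde pip pp pn x x')) z"
        using \<open>0 < Z\<close> by (simp add: z(1) ptilde_def Z_def[symmetric] divide_ennreal ennreal_times_divide)
    qed
  qed
  finally show ?thesis .
qed

end

theorem theorem1:
  fixes M :: "'a measure" and pip :: real and pp pn :: "'a \<Rightarrow> real"
  assumes "sigma_finite_measure M"
    and "0 \<le> pip" and "pip \<le> 1"
    and "pp \<in> borel_measurable M" and "pn \<in> borel_measurable M"
    and "\<And>x. x \<in> space M \<Longrightarrow> 0 \<le> pp x"
    and "\<And>x. x \<in> space M \<Longrightarrow> 0 \<le> pn x"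
    and "(\<integral>\<^sup>+ x. ennreal (pp x) \<partial>M) = 1"
    and "(\<integral>\<^sup>+ x. ennreal (pn x) \<partial>M) = 1"
  shows "collected_pair_law M pip pp pn
           = density (M \<Otimes>\<^sub>M M) (\<lambda>(x, x'). ennreal (ptilde pip pp pn x x'))
       \<and> (\<forall>n. dataset_law M pip pp pn n
           = PiM {..<n} (\<lambda>_. density (M \<Otimes>\<^sub>M M) (\<lambda>(x, x'). ennreal (ptilde pip pp pn x x'))))"
proof -
  interpret class_conditional_densities M pip pp pn
    by (rule class_conditional_densities.intro[OF assms])
  show ?thesis
    by (simp add: collected_pair_law_eq_density dataset_law_def)
qed

end
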